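(* The hereditary class property $\Delta_\omega$ = "bounded maximum degree after deletion of a bounded number of vertices" — the set of hereditary classes $\mathscr C$ for which there are integers $k,d$ such that every $G\in\mathscr C$ has a set $S$ of at most $k$ vertices with $G-S$ of maximum degree at most $d$ — is a decomposition horizon.
   Context: Graphs are finite and simple. A hereditary class is a class closed under isomorphism and induced subgraphs; a hereditary class property is a set $\Pi$ of hereditary classes closed under passing to hereditary subclasses. For non-decreasing $f$ and positive integer $p$, $\mathscr C$ has an $f$-bounded $\Pi$-decomposition with parameter $p$ if there is $\mathscr D_p\in\Pi$ such that every $G\in\mathscr C$ has a partition $V_1,\dots,V_N$ of $V(G)$ with $N\le f(|G|)$ and $G[V_{i_1}\cup\dots\cup V_{i_p}]\in\mathscr D_p$ for all $i_1,\dots,i_p\in[N]$. $\Pi^\ast$ is the set of hereditary classes that, for every positive integer $p$, have such a decomposition for some non-decreasing $f$ with $f(n)=n^{o(1)}$. $\Pi$ is a decomposition horizon if $\Pi^\ast=\Pi$. *)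

theory Defs
  imports Complex_Main
begin

text \<open>Finite simple graphs, with vertices drawn from nat (every finite graph is
isomorphic to such a graph). A graph is a pair (V, E) of a finite vertex set and a
set of 2-element edges contained in V.\<close>

type_synonym graph = "nat set \<times> nat set set"

definition verts :: "graph \<Rightarrow> nat set" where "verts G = fst G"
definition edges :: "graph \<Rightarrow> nat set set" where "edges G = snd G"

definition wf_graph :: "graph \<Rightarrow> bool" where
  "wf_graph G \<longleftrightarrow> finite (verts G) \<and>
     (\<forall>e\<in>edges G. e \<subseteq> verts G \<and> card e = 2)"

definition induced :: "graph \<Rightarrow> nat set \<Rightarrow> graph" where
  "induced G X = (verts G \<inter> X, {e \<in> edges G. e \<subseteq> X})"

definition graph_iso :: "graph \<Rightarrow> graph \<Rightarrow> bool" where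
  "graph_iso G H \<longleftrightarrow> (\<exists>f. bij_betw f (verts G) (verts H) \<and>
     (\<forall>u\<in>verts G. \<forall>v\<in>verts G. {u, v} \<in> edges G \<longleftrightarrow> {f u, f v} \<in> edges H))"

definition hereditary :: "graph set \<Rightarrow> bool" where
  "hereditary C \<longleftrightarrow> (\<forall>G\<in>C. wf_graph G) \<and>
     (\<forall>G\<in>C. \<forall>H. wf_graph H \<and> graph_iso G H \<longrightarrow> H \<in> C) \<and>
     (\<forall>G\<in>C. \<forall>X. induced G X \<in> C)"

definition hered_property :: "graph set set \<Rightarrow> bool" where
  "hered_property \<Pi> \<longleftrightarrow> (\<forall>C\<in>\<Pi>. hereditary C) \<and>
     (\<forall>C\<in>\<Pi>. \<forall>D. hereditary D \<and> D \<subseteq> C \<longrightarrow> D \<in> \<Pi>)"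

definition has_decomp :: "graph set set \<Rightarrow> graph set \<Rightarrow> (nat \<Rightarrow> real) \<Rightarrow> nat \<Rightarrow> bool" where
  "has_decomp \<Pi> C f p \<longleftrightarrow> (\<exists>D\<in>\<Pi>. \<forall>G\<in>C. \<exists>N::nat. \<exists>P::nat \<Rightarrow> nat set.
      real N \<le> f (card (verts G)) \<and>
      (\<Union>i<N. P i) = verts G \<and>
      (\<forall>i<N. \<forall>j<N. i \<noteq> j \<longrightarrow> P i \<inter> P j = {}) \<and>
      (\<forall>idx::nat \<Rightarrow> nat. (\<forall>j<p. idx j < N) \<longrightarrow> induced G (\<Union>j<p. P (idx j)) \<in> D))"

text \<open>f(n) = n^{o(1)}: for every eps > 0, eventually n^(-eps) <= f n <= n^eps.\<close>
definition subpoly :: "(nat \<Rightarrow> real) \<Rightarrow> bool" where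
  "subpoly f \<longleftrightarrow> (\<forall>\<epsilon>>0. \<forall>\<^sub>F n in sequentially.
      real n powr (-\<epsilon>) \<le> f n \<and> f n \<le> real n powr \<epsilon>)"

definition star :: "graph set set \<Rightarrow> graph set set" where
  "star \<Pi> = {C. hereditary C \<and> (\<forall>p::nat. p \<ge> 1 \<longrightarrow>
      (\<exists>f. mono f \<and> subpoly f \<and> has_decomp \<Pi> C f p))}"

definition decomposition_horizon :: "graph set set \<Rightarrow> bool" where
  "decomposition_horizon \<Pi> \<longleftrightarrow> star \<Pi> = \<Pi>"

definition Delta_omega :: "graph set set" where
  "Delta_omega = {C. hereditary C \<and> (\<exists>k d::nat. \<forall>G\<in>C. \<exists>S \<subseteq> verts G. card S \<le> k \<and>
      (\<forall>v\<in>verts G - S. card {u\<in>verts G - S. {u, v} \<in> edges G} \<le> d))}"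

end

theory Submission
  imports Defs
begin

text \<open>If \<open>C \<in> \<Delta>\<^sub>\<omega>\<close>, the partition into a single part is a decomposition. Conversely,
let the unions of two parts of the decompositions of \<open>C\<close> become of maximum degree at most
\<open>d\<close> after deleting \<open>k\<close> vertices, with \<open>N \<le> n powr (1/8)\<close> parts. If some \<open>G \<in> C\<close> cannot
be brought to maximum degree \<open>t\<close> by deleting \<open>t\<close> vertices, then \<open>G\<close> has more than \<open>t\<close>
vertices of degree \<open>> t\<close>, hence a set \<open>X\<close> of at most \<open>t + t\<^sup>2\<close> vertices in which \<open>t\<close>
vertices have \<open>t\<close> neighbours each. Decompose \<open>G[X]\<close>: by pigeonhole twice, some part
\<open>P\<^sub>i\<close> contains at least \<open>t/N\<^sup>2\<close> of these vertices, each with at least \<open>t/N\<close>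
neighbours in one common part \<open>P\<^sub>j\<close>; deleting \<open>k\<close> vertices of \<open>G[P\<^sub>i \<union> P\<^sub>j]\<close> must
leave degree at most \<open>d\<close>, which forces \<open>t \<le> N\<^sup>2(k + d)\<close>. Together with
\<open>N\<^sup>8 \<le> |X| \<le> 2t\<^sup>2\<close> this bounds \<open>t\<close> by \<open>2(k + d)\<^sup>4\<close>, so every larger \<open>t\<close> witnesses
\<open>C \<in> \<Delta>\<^sub>\<omega>\<close>.\<close>

lemma pigeonhole_cover:
  assumes "finite I" "A \<subseteq> (\<Union>i\<in>I. P i)" "A \<noteq> {}"
  shows "\<exists>i\<in>I. card A \<le> card I * card (A \<inter> P i)"
proof (rule ccontr)
  assume "\<not> ?thesis"
  then have small: "card I * card (A \<inter> P i) < card A" if "i \<in> I" for i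
    using that by (simp add: not_le)
  have "I \<noteq> {}" using assms(2,3) by blast
  have "A = (\<Union>i\<in>I. A \<inter> P i)" using assms(2) by blast
  then have "card A \<le> (\<Sum>i\<in>I. card (A \<inter> P i))"
    using card_UN_le [OF assms(1)] by metis
  then have "card I * card A \<le> card I * (\<Sum>i\<in>I. card (A \<inter> P i))"
    by (rule mult_le_mono2)
  also have "\<dots> = (\<Sum>i\<in>I. card I * card (A \<inter> P i))"
    by (rule sum_distrib_left)
  also have "\<dots> < (\<Sum>i\<in>I. card A)"
    using assms(1) \<open>I \<noteq> {}\<close> small by (rule sum_strict_mono)
  finally show False by simp
qed

lemma pow_le_of_le_root:
  assumes "0 < m" "real N \<le> real n powr (1 / real m)"
  shows "N ^ m \<le> n"
proof -
  have "real N ^ m \<le> (real n powr (1 / real m)) ^ m"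
    using assms(2) by (rule power_mono) simp
  also have "\<dots> = real n"
    using assms(1) by (simp add: powr_realpow' [symmetric] powr_powr)
  finally show ?thesis by (metis of_nat_le_iff of_nat_power)
qed

lemma le_of_pow8_le:
  fixes N t m :: nat
  assumes "N ^ 8 \<le> 2 * t\<^sup>2" "t \<le> N\<^sup>2 * m"
  shows "t \<le> 2 * m ^ 4"
proof -
  have "t\<^sup>2 * t\<^sup>2 = t ^ 4" by algebra
  also have "\<dots> \<le> (N\<^sup>2 * m) ^ 4" using assms(2) by (rule power_mono) simp
  also have "\<dots> = N ^ 8 * m ^ 4" by algebra
  also have "\<dots> \<le> t\<^sup>2 * (2 * m ^ 4)" using assms(1) by simp
  finally have "t\<^sup>2 * t\<^sup>2 \<le> t\<^sup>2 * (2 * m ^ 4)" .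
  then have "t\<^sup>2 \<le> 2 * m ^ 4 \<or> t = 0"
    by (simp only: mult_le_cancel1) auto
  moreover have "t \<le> t\<^sup>2" by (simp add: power2_eq_square)
  ultimately show ?thesis by linarith
qed

lemma verts_induced [simp]: "verts (induced G X) = verts G \<inter> X"
  by (simp add: induced_def verts_def)

lemma edges_induced [simp]: "edges (induced G X) = {e \<in> edges G. e \<subseteq> X}"
  by (simp add: induced_def edges_def)

definition nbrs :: "graph \<Rightarrow> nat \<Rightarrow> nat set" where
  "nbrs G v = {u \<in> verts G. {u, v} \<in> edges G}"

lemma nbrs_induced: "v \<in> X \<Longrightarrow> nbrs (induced G X) v = nbrs G v \<inter> X"
  by (auto simp: nbrs_def)

lemma finite_nbrs: "finite (verts G) \<Longrightarrow> finite (nbrs G v)"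
  by (simp add: nbrs_def)

definition degree_le_after_deleting :: "nat \<Rightarrow> nat \<Rightarrow> graph \<Rightarrow> bool" where
  "degree_le_after_deleting k d G \<longleftrightarrow>
     (\<exists>S \<subseteq> verts G. card S \<le> k \<and> (\<forall>v \<in> verts G - S. card (nbrs G v - S) \<le> d))"

lemma Delta_omega_iff:
  "C \<in> Delta_omega \<longleftrightarrow> hereditary C \<and> (\<exists>k d. \<forall>G\<in>C. degree_le_after_deleting k d G)"
proof -
  have "{u \<in> verts G - S. {u, v} \<in> edges G} = nbrs G v - S" for G S v
    by (auto simp: nbrs_def)
  then show ?thesis
    by (simp add: Delta_omega_def degree_le_after_deleting_def)
qed

lemma many_high_degree_if_not_degree_le:
  assumes "finite (verts G)" "\<not> degree_le_after_deleting t t G"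
  shows "t < card {v \<in> verts G. t < card (nbrs G v)}"
proof (rule ccontr)
  define S where "S = {v \<in> verts G. t < card (nbrs G v)}"
  assume "\<not> t < card S"
  then have "card S \<le> t" by simp
  moreover have "card (nbrs G v - S) \<le> t" if "v \<in> verts G - S" for v
  proof -
    have "card (nbrs G v - S) \<le> card (nbrs G v)"
      using finite_nbrs [OF assms(1)] by (rule card_mono) blast
    then show ?thesis using that unfolding S_def by auto
  qed
  moreover have "S \<subseteq> verts G" unfolding S_def by blast
  ultimately have "degree_le_after_deleting t t G"
    unfolding degree_le_after_deleting_def by blast
  with assms(2) show False ..
qed

lemma small_dense_subset_if_not_degree_le:
  assumes fin: "finite (verts G)" and "\<not> degree_le_after_deleting t t G"
  obtains X V where "X \<subseteq> verts G" "card X \<le> t + t * t" "V \<subseteq> X" "card V = t"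
    "\<And>v. v \<in> V \<Longrightarrow> t \<le> card (nbrs G v \<inter> X)"
proof -
  obtain V where V: "V \<subseteq> {v \<in> verts G. t < card (nbrs G v)}" "card V = t"
    using many_high_degree_if_not_degree_le [OF assms]
    by (meson less_imp_le obtain_subset_with_card_n)
  have "\<exists>Y. Y \<subseteq> nbrs G v \<and> card Y = t" if "v \<in> V" for v
    using that V(1) by (auto intro: obtain_subset_with_card_n less_imp_le)
  then obtain Y where Y: "\<And>v. v \<in> V \<Longrightarrow> Y v \<subseteq> nbrs G v \<and> card (Y v) = t"
    by metis
  define X where "X = V \<union> (\<Union>v\<in>V. Y v)"
  have "X \<subseteq> verts G"
    using V(1) Y unfolding X_def nbrs_def by blast
  then have finX: "finite X" using fin by (rule finite_subset)
  have finV: "finite V" using finX unfolding X_def by simp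
  have "card X \<le> card V + card (\<Union>v\<in>V. Y v)"
    unfolding X_def by (rule card_Un_le)
  also have "card (\<Union>v\<in>V. Y v) \<le> (\<Sum>v\<in>V. card (Y v))"
    using finV by (rule card_UN_le)
  also have "(\<Sum>v\<in>V. card (Y v)) = t * t"
    using Y V(2) by simp
  finally have "card X \<le> t + t * t" using V(2) by simp
  moreover have "t \<le> card (nbrs G v \<inter> X)" if "v \<in> V" for v
  proof -
    have "Y v \<subseteq> nbrs G v \<inter> X" using Y that unfolding X_def by blast
    then have "card (Y v) \<le> card (nbrs G v \<inter> X)" using finX by (simp add: card_mono)
    then show ?thesis using Y that by simp
  qed
  moreover have "V \<subseteq> X" unfolding X_def by blast
  ultimately show ?thesis using that \<open>X \<subseteq> verts G\<close> V(2) by metis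
qed

lemma pigeonhole_common_parts:
  assumes cover: "(\<Union>i<N. P i) = verts H" and V: "V \<subseteq> verts H" "V \<noteq> {}"
    and deg: "\<And>v. v \<in> V \<Longrightarrow> t \<le> card (nbrs H v)" and "0 < t"
  obtains i j F where "i < N" "j < N" "F \<subseteq> V \<inter> P i" "card V \<le> N * N * card F"
    "\<And>v. v \<in> F \<Longrightarrow> t \<le> N * card (nbrs H v \<inter> P j)"
proof -
  have "\<exists>j<N. t \<le> N * card (nbrs H v \<inter> P j)" if "v \<in> V" for v
  proof -
    have "nbrs H v \<noteq> {}" using deg [OF that] \<open>0 < t\<close> by auto
    moreover have "nbrs H v \<subseteq> (\<Union>j\<in>{..<N}. P j)" using cover by (auto simp: nbrs_def)
    ultimately obtain j where "j \<in> {..<N}" "card (nbrs H v) \<le> card {..<N} * card (nbrs H v \<inter> P j)"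
      using pigeonhole_cover [OF finite_lessThan] by blast
    then show ?thesis using deg [OF that] by (auto intro: le_trans)
  qed
  then obtain a where a: "\<And>v. v \<in> V \<Longrightarrow> a v < N \<and> t \<le> N * card (nbrs H v \<inter> P (a v))"
    by metis
  define Q where "Q = (\<lambda>(i, j). P i \<inter> {v. a v = j})"
  have "V \<subseteq> (\<Union>ij\<in>{..<N} \<times> {..<N}. Q ij)"
    using V(1) cover a unfolding Q_def by fastforce
  then obtain i j where ij: "i < N" "j < N" and "card V \<le> N * N * card (V \<inter> Q (i, j))"
    using pigeonhole_cover [of "{..<N} \<times> {..<N}" V Q] V(2) by (auto simp: card_cartesian_product)
  moreover have "V \<inter> Q (i, j) = V \<inter> P i \<inter> {v. a v = j}" unfolding Q_def by auto
  ultimately show thesis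
    using that [OF ij, of "V \<inter> P i \<inter> {v. a v = j}"] a by auto
qed

lemma dense_threshold_le_of_two_part_cover:
  assumes fin: "finite (verts H)" and cover: "(\<Union>i<N. P i) = verts H"
    and pairs: "\<And>i j. i < N \<Longrightarrow> j < N \<Longrightarrow> degree_le_after_deleting k d (induced H (P i \<union> P j))"
    and V: "V \<subseteq> verts H" "t \<le> card V" and deg: "\<And>v. v \<in> V \<Longrightarrow> t \<le> card (nbrs H v)"
  shows "t \<le> N\<^sup>2 * (k + d)"
proof (rule ccontr)
  assume "\<not> ?thesis"
  then have big: "N * N * (k + d) < t" by (simp add: power2_eq_square)
  then have "V \<noteq> {}" "0 < t" using V(2) by auto
  then obtain i j F where ij: "i < N" "j < N" and F: "F \<subseteq> V \<inter> P i"
    "card V \<le> N * N * card F" and F_deg: "\<And>v. v \<in> F \<Longrightarrow> t \<le> N * card (nbrs H v \<inter> P j)"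
    using pigeonhole_common_parts [OF cover V(1) _ deg] by blast
  define H' where "H' = induced H (P i \<union> P j)"
  obtain S where S: "S \<subseteq> verts H'" "card S \<le> k"
    and S_deg: "\<And>v. v \<in> verts H' - S \<Longrightarrow> card (nbrs H' v - S) \<le> d"
    using pairs [OF ij] unfolding degree_le_after_deleting_def H'_def by blast
  have fin': "finite (verts H')" using fin unfolding H'_def by simp
  have finS: "finite S" using S(1) fin' by (rule finite_subset)
  have "N * N * (k + d) < N * N * card F" using big F(2) V(2) by linarith
  then have "k + d < card F" using mult_less_cancel1 by blast
  have "\<not> F \<subseteq> S"
  proof
    assume "F \<subseteq> S"
    then have "card F \<le> card S" using finS by (rule card_mono [rotated])
    then show False using S(2) \<open>k + d < card F\<close> by linarith
  qed
  then obtain v where v: "v \<in> F" "v \<notin> S" by blast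
  have "N * (k + d) \<le> N * N * (k + d)" using ij by simp
  then have "N * (k + d) < N * card (nbrs H v \<inter> P j)" using big F_deg [OF v(1)] by linarith
  then have "k + d < card (nbrs H v \<inter> P j)" using mult_less_cancel1 by blast
  moreover have "v \<in> verts H' - S" using v F(1) V(1) unfolding H'_def by auto
  moreover have "nbrs H v \<inter> P j - S \<subseteq> nbrs H' v - S"
    using v(1) F(1) unfolding H'_def nbrs_def by auto
  then have "card (nbrs H v \<inter> P j - S) \<le> card (nbrs H' v - S)"
    using finite_nbrs [OF fin'] by (simp add: card_mono)
  moreover have "card (nbrs H v \<inter> P j) - card S \<le> card (nbrs H v \<inter> P j - S)"
    using finS by (rule diff_card_le_card_Diff)
  ultimately show False using S(2) S_deg [of v] by linarith
qed

lemma degree_le_after_deleting_if_small_covers: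
  assumes fin: "finite (verts G)" and t: "2 * (k + d) ^ 4 < t"
    and covers: "\<And>X. X \<subseteq> verts G \<Longrightarrow> t \<le> card X \<Longrightarrow> \<exists>N P. N ^ 8 \<le> card X \<and> (\<Union>i<N. P i) = X \<and>
      (\<forall>i<N. \<forall>j<N. degree_le_after_deleting k d (induced (induced G X) (P i \<union> P j)))"
  shows "degree_le_after_deleting t t G"
proof (rule ccontr)
  assume "\<not> ?thesis"
  then obtain X V where X: "X \<subseteq> verts G" "card X \<le> t + t * t" and V: "V \<subseteq> X" "card V = t"
    and dense: "\<And>v. v \<in> V \<Longrightarrow> t \<le> card (nbrs G v \<inter> X)"
    using small_dense_subset_if_not_degree_le [OF fin] by blast
  have finX: "finite X" using X(1) fin by (rule finite_subset)
  have "t \<le> card X" using V finX card_mono by metis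
  then obtain N P where N: "N ^ 8 \<le> card X" and cover: "(\<Union>i<N. P i) = X"
    and pairs: "\<forall>i<N. \<forall>j<N. degree_le_after_deleting k d (induced (induced G X) (P i \<union> P j))"
    using covers [OF X(1)] by blast
  have "t \<le> N\<^sup>2 * (k + d)"
  proof (rule dense_threshold_le_of_two_part_cover [where H = "induced G X" and V = V])
    show "finite (verts (induced G X))" using finX by simp
    show "(\<Union>i<N. P i) = verts (induced G X)" using cover X(1) by auto
    show "V \<subseteq> verts (induced G X)" using V X(1) by auto
    show "t \<le> card V" using V(2) by simp
    show "t \<le> card (nbrs (induced G X) v)" if "v \<in> V" for v
      using dense [OF that] nbrs_induced [of v X G] V(1) that by auto
  qed (use pairs in blast)
  moreover have "N ^ 8 \<le> 2 * t\<^sup>2"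
    using N X(2) le_square [of t] unfolding power2_eq_square by linarith
  ultimately have "t \<le> 2 * (k + d) ^ 4" by (intro le_of_pow8_le)
  with t show False by simp
qed

lemma has_decomp_two_parts:
  assumes "has_decomp \<Pi> C f 2"
  obtains D where "D \<in> \<Pi>" and "\<And>G. G \<in> C \<Longrightarrow> \<exists>N P. real N \<le> f (card (verts G)) \<and>
    (\<Union>i<N. P i) = verts G \<and> (\<forall>i<N. \<forall>j<N. induced G (P i \<union> P j) \<in> D)"
proof -
  obtain D where "D \<in> \<Pi>" and dec: "\<forall>G\<in>C. \<exists>N P. real N \<le> f (card (verts G)) \<and>
      (\<Union>i<N. P i) = verts G \<and> (\<forall>i<N. \<forall>j<N. i \<noteq> j \<longrightarrow> P i \<inter> P j = {}) \<and>
      (\<forall>idx::nat \<Rightarrow> nat. (\<forall>l<2. idx l < N) \<longrightarrow> induced G (\<Union>l<2. P (idx l)) \<in> D)"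
    using assms unfolding has_decomp_def ..
  have pair: "(\<Union>l<2. P ((\<lambda>l::nat. if l = 0 then i else j) l)) = P i \<union> P j"
    for P :: "nat \<Rightarrow> nat set" and i j
    by (auto simp: lessThan_nat_numeral)
  show thesis
  proof (rule that [OF \<open>D \<in> \<Pi>\<close>])
    fix G assume "G \<in> C"
    obtain N P where N: "real N \<le> f (card (verts G))" and cover: "(\<Union>i<N. P i) = verts G"
      and "\<forall>i<N. \<forall>j<N. i \<noteq> j \<longrightarrow> P i \<inter> P j = {}"
      and two: "\<forall>idx::nat \<Rightarrow> nat. (\<forall>l<2. idx l < N) \<longrightarrow> induced G (\<Union>l<2. P (idx l)) \<in> D"
      using bspec [OF dec \<open>G \<in> C\<close>] by (elim exE conjE) (rule that)
    have pairs: "induced G (P i \<union> P j) \<in> D" if "i < N" "j < N" for i j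
      using two [rule_format, of "\<lambda>l. if l = 0 then i else j"] that unfolding pair by simp
    show "\<exists>N P. real N \<le> f (card (verts G)) \<and>
      (\<Union>i<N. P i) = verts G \<and> (\<forall>i<N. \<forall>j<N. induced G (P i \<union> P j) \<in> D)"
      using N cover pairs by (intro exI [of _ N] exI [of _ P]) simp
  qed
qed

lemma Delta_omega_if_subpoly_decomp:
  assumes her: "hereditary C" and "subpoly f" and "has_decomp Delta_omega C f 2"
  shows "C \<in> Delta_omega"
proof -
  obtain D where "D \<in> Delta_omega" and dec: "\<And>G. G \<in> C \<Longrightarrow> \<exists>N P. real N \<le> f (card (verts G)) \<and>
      (\<Union>i<N. P i) = verts G \<and> (\<forall>i<N. \<forall>j<N. induced G (P i \<union> P j) \<in> D)"
    using has_decomp_two_parts [OF assms(3)] by blast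
  then obtain k d where kd: "\<And>H. H \<in> D \<Longrightarrow> degree_le_after_deleting k d H"
    unfolding Delta_omega_iff by blast
  have "\<forall>\<^sub>F n in sequentially. real n powr (- (1 / 8)) \<le> f n \<and> f n \<le> real n powr (1 / 8)"
    using assms(2) unfolding subpoly_def by simp
  then obtain n0 where n0: "\<And>n. n0 \<le> n \<Longrightarrow> f n \<le> real n powr (1 / real (8::nat))"
    unfolding eventually_sequentially by auto
  define t where "t = max n0 (2 * (k + d) ^ 4 + 1)"
  have "degree_le_after_deleting t t G" if "G \<in> C" for G
  proof (rule degree_le_after_deleting_if_small_covers)
    show "finite (verts G)" using her that unfolding hereditary_def wf_graph_def by blast
    show "2 * (k + d) ^ 4 < t" unfolding t_def by simp
    fix X assume X: "X \<subseteq> verts G" "t \<le> card X"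
    have "induced G X \<in> C" using her that unfolding hereditary_def by blast
    moreover have "verts (induced G X) = X" using X(1) by auto
    ultimately obtain N P where N: "real N \<le> f (card X)" and cover: "(\<Union>i<N. P i) = X"
      and pairs: "\<forall>i<N. \<forall>j<N. induced (induced G X) (P i \<union> P j) \<in> D"
      using dec by metis
    have "f (card X) \<le> real (card X) powr (1 / real (8::nat))"
      using n0 X(2) unfolding t_def by simp
    then have "N ^ 8 \<le> card X" using N by (intro pow_le_of_le_root) auto
    then show "\<exists>N P. N ^ 8 \<le> card X \<and> (\<Union>i<N. P i) = X \<and>
      (\<forall>i<N. \<forall>j<N. degree_le_after_deleting k d (induced (induced G X) (P i \<union> P j)))"
      using cover pairs kd by blast
  qed
  then show ?thesis using her unfolding Delta_omega_iff by blast
qed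

lemma subpoly_const_one: "subpoly (\<lambda>_. 1)"
  unfolding subpoly_def eventually_sequentially
proof (intro allI impI exI [of _ 1])
  fix \<epsilon> :: real and n :: nat
  assume "0 < \<epsilon>" "1 \<le> n"
  then have "1 \<le> real n powr \<epsilon>" by (simp add: ge_one_powr_ge_zero)
  moreover have "real n powr (- \<epsilon>) = inverse (real n powr \<epsilon>)"
    using \<open>1 \<le> n\<close> by (simp add: powr_minus)
  ultimately show "real n powr (- \<epsilon>) \<le> 1 \<and> 1 \<le> real n powr \<epsilon>"
    by (simp add: inverse_le_1_iff)
qed

lemma Delta_omega_subset_star: "Delta_omega \<subseteq> star Delta_omega"
proof
  fix C assume C: "C \<in> Delta_omega"
  then have her: "hereditary C" by (simp add: Delta_omega_iff)
  have "has_decomp Delta_omega C (\<lambda>_. 1) p" for p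
    unfolding has_decomp_def
  proof (intro bexI [OF _ C] ballI)
    fix G assume "G \<in> C"
    then have "induced G X \<in> C" for X using her unfolding hereditary_def by blast
    then show "\<exists>N P. real N \<le> 1 \<and> (\<Union>i<N. P i) = verts G \<and>
        (\<forall>i<N. \<forall>j<N. i \<noteq> j \<longrightarrow> P i \<inter> P j = {}) \<and>
        (\<forall>idx. (\<forall>j<p. idx j < N) \<longrightarrow> induced G (\<Union>j<p. P (idx j)) \<in> C)"
      by (intro exI [of _ "1::nat"] exI [of _ "\<lambda>_. verts G"]) auto
  qed
  moreover have "mono (\<lambda>_::nat. 1::real)" by (simp add: mono_def)
  ultimately show "C \<in> star Delta_omega"
    unfolding star_def using her subpoly_const_one by blast
qed

theorem mainTheorem15:
  shows "decomposition_horizon Delta_omega"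
  unfolding decomposition_horizon_def
proof
  show "star Delta_omega \<subseteq> Delta_omega"
  proof
    fix C assume "C \<in> star Delta_omega"
    then have "hereditary C" "\<exists>f. mono f \<and> subpoly f \<and> has_decomp Delta_omega C f 2"
      unfolding star_def by auto
    then obtain f where "hereditary C" "subpoly f" "has_decomp Delta_omega C f 2" by blast
    then show "C \<in> Delta_omega" by (rule Delta_omega_if_subpoly_decomp)
  qed
qed (rule Delta_omega_subset_star)

end
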